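(* Suppose $\ell'$ is $\beta$-Lipschitz and $|\ell'|\le G$ on $\mathbb{R}$. Let $R\ge1$ and $\beta(R):=2L^2R^{2L-2}(\beta+G)$. Then $\mathcal{R}$ is $\beta(R)$-smooth on $B(R)$: for all $W,V\in B(R)$, $\|\nabla\mathcal{R}(W)-\nabla\mathcal{R}(V)\|\le\beta(R)\|W-V\|$.
   Context: Given $z_1,\dots,z_n\in\mathbb{R}^d$ with $\|z_i\|\le1$. A depth-$L$ linear network is $W=(W_L,\dots,W_1)$ with $W_k\in\mathbb{R}^{d_k\times d_{k-1}}$, $d_0=d$, $d_L=1$, $w_{\mathrm{prod}}:=(W_L\cdots W_1)^\top$, and $\mathcal{R}(W)=\frac1n\sum_{i=1}^n\ell(\langle w_{\mathrm{prod}},z_i\rangle)$. $\|W\|$ denotes the Euclidean norm of all entries of $W$ jointly, and $\|\cdot\|_F$ the Frobenius norm. $B(R):=\{W:\|W_k\|_F\le R\text{ for all }1\le k\le L\}$. *)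

theory Defs
  imports "HOL-Analysis.Analysis"
begin

text \<open>Matrices of size m x p are represented as functions nat => nat => real,
  only entries with row < m and column < p being meaningful.
  A network parameter W is a function k => matrix, layer k (1 <= k <= L)
  having size (d k) x (d (k-1)).\<close>

type_synonym mat = "nat \<Rightarrow> nat \<Rightarrow> real"
type_synonym params = "nat \<Rightarrow> mat"

definition mat_mul :: "nat \<Rightarrow> mat \<Rightarrow> mat \<Rightarrow> mat" where
  "mat_mul m A B = (\<lambda>i j. \<Sum>l<m. A i l * B l j)"

definition mat_id :: mat where
  "mat_id = (\<lambda>i j. if i = j then 1 else 0)"

fun prod_upto :: "(nat \<Rightarrow> nat) \<Rightarrow> params \<Rightarrow> nat \<Rightarrow> mat" where
  "prod_upto d W 0 = mat_id"
| "prod_upto d W (Suc k) = mat_mul (d k) (W (Suc k)) (prod_upto d W k)"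

text \<open>w_prod = (W_L \<cdots> W_1)^T, a vector of length d 0.\<close>
definition w_prod :: "(nat \<Rightarrow> nat) \<Rightarrow> nat \<Rightarrow> params \<Rightarrow> nat \<Rightarrow> real" where
  "w_prod d L W = (\<lambda>j. prod_upto d W L 0 j)"

definition risk :: "(real \<Rightarrow> real) \<Rightarrow> nat \<Rightarrow> (nat \<Rightarrow> nat \<Rightarrow> real)
    \<Rightarrow> (nat \<Rightarrow> nat) \<Rightarrow> nat \<Rightarrow> params \<Rightarrow> real" where
  "risk loss n z d L W =
     (1 / real n) * (\<Sum>i<n. loss (\<Sum>j<d 0. w_prod d L W j * z i j))"

definition frob :: "nat \<Rightarrow> nat \<Rightarrow> mat \<Rightarrow> real" where
  "frob m p A = sqrt (\<Sum>i<m. \<Sum>j<p. (A i j)\<^sup>2)"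

definition pnorm :: "(nat \<Rightarrow> nat) \<Rightarrow> nat \<Rightarrow> params \<Rightarrow> real" where
  "pnorm d L W = sqrt (\<Sum>k\<in>{1..L}. \<Sum>i<d k. \<Sum>j<d (k - 1). (W k i j)\<^sup>2)"

definition ball_R :: "(nat \<Rightarrow> nat) \<Rightarrow> nat \<Rightarrow> real \<Rightarrow> params set" where
  "ball_R d L R = {W. \<forall>k\<in>{1..L}. frob (d k) (d (k - 1)) (W k) \<le> R}"

definition perturb :: "params \<Rightarrow> nat \<Rightarrow> nat \<Rightarrow> nat \<Rightarrow> real \<Rightarrow> params" where
  "perturb W k i j t = W(k := (W k)(i := (W k i)(j := W k i j + t)))"

definition grad :: "(params \<Rightarrow> real) \<Rightarrow> params \<Rightarrow> params" where
  "grad F W = (\<lambda>k i j. deriv (\<lambda>t. F (perturb W k i j t)) 0)"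

definition vnorm :: "nat \<Rightarrow> (nat \<Rightarrow> real) \<Rightarrow> real" where
  "vnorm m x = sqrt (\<Sum>j<m. (x j)\<^sup>2)"

end

theory Submission
  imports Defs
begin

text \<open>
  Write the network output on a sample as \<open>s = h\<^sub>k W\<^sub>k g\<^sub>k\<^sub>-\<^sub>1\<close>, where
  \<open>g\<^sub>m = W\<^sub>m \<cdots> W\<^sub>1 z\<close> is the forward activation and \<open>h\<^sub>k = W\<^sub>L \<cdots> W\<^sub>k\<^sub>+\<^sub>1\<close>
  the backward row vector. Since \<open>s\<close> is affine in each single entry of \<open>W\<^sub>k\<close>, the
  gradient of the risk in layer \<open>k\<close> is the average of \<open>\<ell>'(s) h\<^sub>k\<^sup>T g\<^sub>k\<^sub>-\<^sub>1\<^sup>T\<close>.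
  On \<open>B(R)\<close> submultiplicativity of the Frobenius norm gives \<open>|g\<^sub>m| \<le> R\<^sup>m\<close>,
  \<open>|h\<^sub>k| \<le> R\<^sup>L\<^sup>-\<^sup>k\<close>, and, by telescoping, differences between two networks of order
  \<open>R\<^sup>L\<^sup>-\<^sup>1 \<Sum>\<^sub>l |W\<^sub>l - V\<^sub>l|\<close>. Splitting
  \<open>\<ell>'(s\<^sub>W) \<nabla>s\<^sub>W - \<ell>'(s\<^sub>V) \<nabla>s\<^sub>V = (\<ell>'(s\<^sub>W) - \<ell>'(s\<^sub>V)) \<nabla>s\<^sub>W + \<ell>'(s\<^sub>V) (\<nabla>s\<^sub>W - \<nabla>s\<^sub>V)\<close>
  and using the Lipschitz bound on the first and \<open>|\<ell>'| \<le> G\<close> on the second term yields the claim.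
\<close>

section \<open>Euclidean and Frobenius norms\<close>

lemma vnorm_eq_L2_set: "vnorm m x = L2_set x {..<m}"
  by (simp add: vnorm_def L2_set_def)

lemma frob_eq_L2_set: "frob m p A = L2_set (\<lambda>i. L2_set (A i) {..<p}) {..<m}"
  by (simp add: frob_def L2_set_def sum_nonneg)

lemma pnorm_eq_L2_set: "pnorm d L W = L2_set (\<lambda>k. frob (d k) (d (k - 1)) (W k)) {1..L}"
  by (simp add: pnorm_def frob_def L2_set_def sum_nonneg)

lemma vnorm_nonneg: "0 \<le> vnorm m x"
  by (simp add: vnorm_def sum_nonneg)

lemma frob_nonneg: "0 \<le> frob m p A"
  by (simp add: frob_def sum_nonneg)

lemma pnorm_nonneg: "0 \<le> pnorm d L W"
  by (simp add: pnorm_def sum_nonneg)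

lemma vnorm_cong: "(\<And>i. i < m \<Longrightarrow> x i = y i) \<Longrightarrow> vnorm m x = vnorm m y"
  unfolding vnorm_def by (intro arg_cong[where f = sqrt] sum.cong) auto

lemma pnorm_cong:
  "(\<And>k i j. k \<in> {1..L} \<Longrightarrow> i < d k \<Longrightarrow> j < d (k - 1) \<Longrightarrow> W k i j = V k i j)
    \<Longrightarrow> pnorm d L W = pnorm d L V"
  unfolding pnorm_def by (intro arg_cong[where f = sqrt] sum.cong) auto

lemma vnorm_triangle: "vnorm m (\<lambda>i. x i + y i) \<le> vnorm m x + vnorm m y"
  unfolding vnorm_eq_L2_set by (rule L2_set_triangle_ineq)

lemma frob_triangle: "frob m p (\<lambda>i j. A i j + B i j) \<le> frob m p A + frob m p B"
proof -
  have "frob m p (\<lambda>i j. A i j + B i j)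
      \<le> L2_set (\<lambda>i. L2_set (A i) {..<p} + L2_set (B i) {..<p}) {..<m}"
    unfolding frob_eq_L2_set by (rule L2_set_mono) (auto intro: L2_set_triangle_ineq)
  also have "\<dots> \<le> frob m p A + frob m p B"
    unfolding frob_eq_L2_set by (rule L2_set_triangle_ineq)
  finally show ?thesis .
qed

lemma pnorm_triangle: "pnorm d L (\<lambda>k i j. W k i j + V k i j) \<le> pnorm d L W + pnorm d L V"
proof -
  have "pnorm d L (\<lambda>k i j. W k i j + V k i j)
      \<le> L2_set (\<lambda>k. frob (d k) (d (k - 1)) (W k) + frob (d k) (d (k - 1)) (V k)) {1..L}"
    unfolding pnorm_eq_L2_set by (rule L2_set_mono) (simp_all only: frob_triangle frob_nonneg)
  also have "\<dots> \<le> pnorm d L W + pnorm d L V"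
    unfolding pnorm_eq_L2_set by (rule L2_set_triangle_ineq)
  finally show ?thesis .
qed

lemma pnorm_scale: "pnorm d L (\<lambda>k i j. c * W k i j) = \<bar>c\<bar> * pnorm d L W"
proof -
  have "pnorm d L (\<lambda>k i j. c * W k i j)
      = sqrt (c\<^sup>2 * (\<Sum>k\<in>{1..L}. \<Sum>i<d k. \<Sum>j<d (k - 1). (W k i j)\<^sup>2))"
    by (simp add: pnorm_def power_mult_distrib sum_distrib_left)
  then show ?thesis
    by (simp add: pnorm_def real_sqrt_mult)
qed

lemma pnorm_sum_le:
  "finite X \<Longrightarrow> pnorm d L (\<lambda>k i j. \<Sum>x\<in>X. W x k i j) \<le> (\<Sum>x\<in>X. pnorm d L (W x))"
proof (induction X rule: finite_induct)
  case empty
  then show ?case by (simp add: pnorm_def)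
next
  case (insert a X)
  then show ?case
    using pnorm_triangle[of d L "W a" "\<lambda>k i j. \<Sum>x\<in>X. W x k i j"] by simp
qed

lemma pnorm_average_le:
  assumes "\<And>x. x < n \<Longrightarrow> pnorm d L (W x) \<le> C" and "C \<ge> 0"
  shows "pnorm d L (\<lambda>k i j. 1 / real n * (\<Sum>x<n. W x k i j)) \<le> C"
proof -
  have "pnorm d L (\<lambda>k i j. 1 / real n * (\<Sum>x<n. W x k i j))
      = 1 / real n * pnorm d L (\<lambda>k i j. \<Sum>x<n. W x k i j)"
    using pnorm_scale[of d L "1 / real n" "\<lambda>k i j. \<Sum>x<n. W x k i j"] by simp
  also have "\<dots> \<le> 1 / real n * (\<Sum>x<n. pnorm d L (W x))"
    using pnorm_sum_le[of "{..<n}" d L W] by (simp add: divide_right_mono)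
  also have "\<dots> \<le> 1 / real n * (real n * C)"
    using sum_bounded_above[of "{..<n}" "\<lambda>x. pnorm d L (W x)" C] assms(1)
    by (intro mult_left_mono) auto
  also have "\<dots> \<le> C"
    using assms(2) by (cases "n = 0") auto
  finally show ?thesis .
qed

lemma vnorm_mat_vec_le: "vnorm m (\<lambda>i. \<Sum>j<p. A i j * v j) \<le> frob m p A * vnorm p v"
proof -
  have "vnorm m (\<lambda>i. \<Sum>j<p. A i j * v j) = L2_set (\<lambda>i. \<bar>\<Sum>j<p. A i j * v j\<bar>) {..<m}"
    by (simp add: vnorm_eq_L2_set L2_set_def)
  also have "\<dots> \<le> L2_set (\<lambda>i. L2_set (A i) {..<p} * L2_set v {..<p}) {..<m}"
  proof (rule L2_set_mono)
    fix i
    have "\<bar>\<Sum>j<p. A i j * v j\<bar> \<le> (\<Sum>j<p. \<bar>A i j\<bar> * \<bar>v j\<bar>)"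
      by (rule order_trans[OF sum_abs]) (simp add: abs_mult)
    also have "\<dots> \<le> L2_set (A i) {..<p} * L2_set v {..<p}"
      by (rule L2_set_mult_ineq)
    finally show "\<bar>\<Sum>j<p. A i j * v j\<bar> \<le> L2_set (A i) {..<p} * L2_set v {..<p}" .
  qed simp
  also have "\<dots> = frob m p A * vnorm p v"
    unfolding frob_eq_L2_set vnorm_eq_L2_set by (rule L2_set_left_distrib[symmetric]) simp
  finally show ?thesis .
qed

lemma frob_transpose: "frob p m (\<lambda>j i. A i j) = frob m p A"
  unfolding frob_def by (rule arg_cong[where f = sqrt]) (rule sum.swap)

lemma vnorm_vec_mat_le: "vnorm p (\<lambda>j. \<Sum>i<m. u i * A i j) \<le> vnorm m u * frob m p A"
proof -
  have "vnorm p (\<lambda>j. \<Sum>i<m. u i * A i j) = vnorm p (\<lambda>j. \<Sum>i<m. A i j * u i)"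
    by (simp add: mult.commute)
  also have "\<dots> \<le> frob p m (\<lambda>j i. A i j) * vnorm m u"
    by (rule vnorm_mat_vec_le)
  finally show ?thesis
    by (simp add: frob_transpose[of p m A] mult.commute)
qed

lemma frob_outer: "frob m p (\<lambda>i j. a i * b j) = vnorm m a * vnorm p b"
  unfolding frob_def vnorm_def
  by (simp add: power_mult_distrib sum_product[symmetric] real_sqrt_mult)

lemma pnorm_outer_le:
  assumes "\<And>k. k \<in> {1..L} \<Longrightarrow> vnorm (d k) (a k) \<le> A k"
    and "\<And>k. k \<in> {1..L} \<Longrightarrow> vnorm (d (k - 1)) (b k) \<le> B k"
    and "\<And>k. k \<in> {1..L} \<Longrightarrow> A k * B k \<le> C"
  shows "pnorm d L (\<lambda>k i j. a k i * b k j) \<le> real L * C"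
proof -
  have "pnorm d L (\<lambda>k i j. a k i * b k j)
      \<le> (\<Sum>k\<in>{1..L}. vnorm (d k) (a k) * vnorm (d (k - 1)) (b k))"
    unfolding pnorm_eq_L2_set frob_outer by (rule L2_set_le_sum) (simp add: vnorm_nonneg)
  also have "\<dots> \<le> real (card {1..L}) * C"
  proof (rule sum_bounded_above)
    fix k assume k: "k \<in> {1..L}"
    have "vnorm (d k) (a k) * vnorm (d (k - 1)) (b k) \<le> A k * B k"
      using assms(1,2)[OF k] by (intro mult_mono) (auto intro: order_trans[OF vnorm_nonneg])
    with assms(3)[OF k] show "vnorm (d k) (a k) * vnorm (d (k - 1)) (b k) \<le> C"
      by linarith
  qed
  finally show ?thesis by simp
qed

definition layer_dist :: "(nat \<Rightarrow> nat) \<Rightarrow> params \<Rightarrow> params \<Rightarrow> nat \<Rightarrow> real" where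
  "layer_dist d W V l = frob (d l) (d (l - 1)) (\<lambda>a b. W l a b - V l a b)"

lemma layer_dist_nonneg: "0 \<le> layer_dist d W V l"
  by (simp add: layer_dist_def frob_nonneg)

lemma sum_layer_dist_le:
  "(\<Sum>l\<in>{1..L}. layer_dist d W V l) \<le> real L * pnorm d L (\<lambda>k i j. W k i j - V k i j)"
proof -
  have "(\<Sum>l\<in>{1..L}. layer_dist d W V l)
      \<le> real (card {1..L}) * pnorm d L (\<lambda>k i j. W k i j - V k i j)"
    unfolding layer_dist_def pnorm_eq_L2_set
    by (rule sum_bounded_above) (rule member_le_L2_set, auto)
  then show ?thesis by simp
qed

lemma frob_layer_le: "W \<in> ball_R d L R \<Longrightarrow> k \<in> {1..L} \<Longrightarrow> frob (d k) (d (k - 1)) (W k) \<le> R"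
  by (simp add: ball_R_def)

section \<open>Forward and backward passes\<close>

definition forward :: "(nat \<Rightarrow> nat) \<Rightarrow> (nat \<Rightarrow> real) \<Rightarrow> params \<Rightarrow> nat \<Rightarrow> nat \<Rightarrow> real" where
  "forward d x W m = (\<lambda>a. \<Sum>j<d 0. prod_upto d W m a j * x j)"

text \<open>\<open>backward d L W r\<close> is the row vector \<open>e\<^sub>0\<^sup>T W\<^sub>L \<cdots> W\<^sub>L\<^sub>-\<^sub>r\<^sub>+\<^sub>1\<close> of length \<open>d (L - r)\<close>.\<close>

fun backward :: "(nat \<Rightarrow> nat) \<Rightarrow> nat \<Rightarrow> params \<Rightarrow> nat \<Rightarrow> nat \<Rightarrow> real" where
  "backward d L W 0 = (\<lambda>a. if a = 0 then 1 else 0)"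
| "backward d L W (Suc r) = (\<lambda>a. \<Sum>m<d (L - r). backward d L W r m * W (L - r) m a)"

definition net_output :: "(nat \<Rightarrow> nat) \<Rightarrow> nat \<Rightarrow> (nat \<Rightarrow> real) \<Rightarrow> params \<Rightarrow> real" where
  "net_output d L x W = (\<Sum>j<d 0. w_prod d L W j * x j)"

definition output_grad :: "(nat \<Rightarrow> nat) \<Rightarrow> nat \<Rightarrow> (nat \<Rightarrow> real) \<Rightarrow> params \<Rightarrow> params" where
  "output_grad d L x W = (\<lambda>k i j. backward d L W (L - k) i * forward d x W (k - 1) j)"

lemma forward_0: "a < d 0 \<Longrightarrow> forward d x W 0 a = x a"
proof -
  assume "a < d 0"
  have "forward d x W 0 a = (\<Sum>j<d 0. if a = j then x j else 0)"
    unfolding forward_def by (rule sum.cong) (auto simp: mat_id_def)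
  with \<open>a < d 0\<close> show ?thesis by simp
qed

lemma forward_Suc: "forward d x W (Suc m) a = (\<Sum>b<d m. W (Suc m) a b * forward d x W m b)"
  unfolding forward_def
  by (simp add: mat_mul_def sum_distrib_left sum_distrib_right mult.assoc sum.swap[of _ "{..<d 0}"])

lemma net_output_split:
  assumes "d L = 1" "r \<le> L"
  shows "net_output d L x W = (\<Sum>a<d (L - r). backward d L W r a * forward d x W (L - r) a)"
  using assms(2)
proof (induction r)
  case 0
  then show ?case using assms(1) by (simp add: net_output_def forward_def w_prod_def)
next
  case (Suc r)
  have L_r: "L - r = Suc (L - Suc r)" using Suc.prems by simp
  have "(\<Sum>a<d (L - r). backward d L W r a * forward d x W (L - r) a)
      = (\<Sum>a<d (L - r). backward d L W r a *
           (\<Sum>b<d (L - Suc r). W (L - r) a b * forward d x W (L - Suc r) b))"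
    by (simp only: L_r forward_Suc)
  also have "\<dots> = (\<Sum>b<d (L - Suc r). backward d L W (Suc r) b * forward d x W (L - Suc r) b)"
    by (simp add: sum_distrib_left sum_distrib_right mult.assoc sum.swap[of _ "{..<d (L - r)}"])
  finally show ?case using Suc by simp
qed

lemma net_output_eq_forward: "d L = 1 \<Longrightarrow> net_output d L x W = forward d x W L 0"
  using net_output_split[of d L 0 x W] by simp

lemma forward_cong: "(\<And>l. 1 \<le> l \<Longrightarrow> l \<le> m \<Longrightarrow> W l = V l) \<Longrightarrow> forward d x W m = forward d x V m"
proof -
  assume "\<And>l. 1 \<le> l \<Longrightarrow> l \<le> m \<Longrightarrow> W l = V l"
  then have "prod_upto d W m = prod_upto d V m"
    by (induction m) auto
  then show ?thesis by (simp add: forward_def)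
qed

lemma backward_cong:
  "r \<le> L \<Longrightarrow> (\<And>l. L - r < l \<Longrightarrow> l \<le> L \<Longrightarrow> W l = V l) \<Longrightarrow> backward d L W r = backward d L V r"
proof (induction r)
  case (Suc r)
  then have "backward d L W r = backward d L V r" and "W (L - r) = V (L - r)"
    by auto
  then show ?case by simp
qed simp

lemma net_output_perturb:
  assumes dL: "d L = 1" and k: "k \<in> {1..L}" and ij: "i < d k" "j < d (k - 1)"
  shows "net_output d L x (perturb W k i j t) = net_output d L x W + t * output_grad d L x W k i j"
proof -
  define P where "P = perturb W k i j t"
  have P_other: "P l = W l" if "l \<noteq> k" for l
    using that by (simp add: P_def perturb_def)
  have k_Suc: "k = Suc (k - 1)" using k by auto
  have forward_k: "forward d x U k a = (\<Sum>b<d (k - 1). U k a b * forward d x U (k - 1) b)" for U a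
    using forward_Suc[of d x U "k - 1" a] by (simp only: k_Suc[symmetric])
  have expand: "net_output d L x U
      = (\<Sum>a<d k. backward d L U (L - k) a * (\<Sum>b<d (k - 1). U k a b * forward d x U (k - 1) b))"
    for U
    using net_output_split[where d = d and L = L and r = "L - k"] dL k by (simp add: forward_k)
  define h where "h = backward d L W (L - k)"
  define g where "g = forward d x W (k - 1)"
  have P_h: "backward d L P (L - k) = h"
    unfolding h_def by (rule backward_cong) (use P_other k in auto)
  have P_g: "forward d x P (k - 1) = g"
    unfolding g_def by (rule forward_cong) (use P_other k in auto)
  have inner: "(\<Sum>b<d (k - 1). P k a b * g b)
      = (\<Sum>b<d (k - 1). W k a b * g b) + (if a = i then t * g j else 0)" for a
  proof -
    have "(\<Sum>b<d (k - 1). P k a b * g b)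
        = (\<Sum>b<d (k - 1). W k a b * g b + (if a = i \<and> b = j then t * g b else 0))"
      by (rule sum.cong) (auto simp: P_def perturb_def algebra_simps)
    then show ?thesis
      using ij by (cases "a = i") (simp_all add: sum.distrib)
  qed
  have "net_output d L x P
      = (\<Sum>a<d k. h a * (\<Sum>b<d (k - 1). W k a b * g b) + (if a = i then h a * (t * g j) else 0))"
    unfolding expand P_h P_g inner by (rule sum.cong) (auto simp: distrib_left)
  also have "\<dots> = net_output d L x W + t * (h i * g j)"
    using ij by (simp add: sum.distrib expand h_def g_def)
  finally show ?thesis
    by (simp add: P_def output_grad_def h_def g_def)
qed

lemma grad_risk:
  assumes dL: "d L = 1" and dl: "\<And>x. (loss has_real_derivative dl x) (at x)"
    and k: "k \<in> {1..L}" and ij: "i < d k" "j < d (k - 1)"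
  shows "grad (risk loss n z d L) W k i j
       = 1 / real n * (\<Sum>x<n. dl (net_output d L (z x) W) * output_grad d L (z x) W k i j)"
proof -
  define s where "s x = net_output d L (z x) W" for x
  define c where "c x = output_grad d L (z x) W k i j" for x
  have risk_perturb: "(\<lambda>t. risk loss n z d L (perturb W k i j t))
      = (\<lambda>t. 1 / real n * (\<Sum>x<n. loss (s x + t * c x)))"
    by (simp add: risk_def net_output_def[symmetric] net_output_perturb[OF dL k ij] s_def c_def)
  have "((\<lambda>t. 1 / real n * (\<Sum>x<n. loss (s x + t * c x))) has_real_derivative
        1 / real n * (\<Sum>x<n. dl (s x + 0 * c x) * c x)) (at 0)"
  proof (intro DERIV_cmult DERIV_sum)
    fix x
    have "((\<lambda>t. s x + t * c x) has_real_derivative c x) (at 0)"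
      by (auto intro!: derivative_eq_intros)
    then show "((\<lambda>t. loss (s x + t * c x)) has_real_derivative dl (s x + 0 * c x) * c x) (at 0)"
      by (rule DERIV_chain2[OF dl])
  qed
  then show ?thesis
    unfolding grad_def risk_perturb by (simp add: DERIV_imp_deriv s_def c_def)
qed

section \<open>Norm bounds on the ball\<close>

context
  fixes d :: "nat \<Rightarrow> nat" and L :: nat and R :: real
  assumes R: "R \<ge> 1"
begin

lemma vnorm_forward_le:
  assumes W: "W \<in> ball_R d L R" and x: "vnorm (d 0) x \<le> 1"
  shows "m \<le> L \<Longrightarrow> vnorm (d m) (forward d x W m) \<le> R ^ m"
proof (induction m)
  case 0
  have "vnorm (d 0) (forward d x W 0) = vnorm (d 0) x"
    by (rule vnorm_cong) (simp add: forward_0)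
  then show ?case using x by simp
next
  case (Suc m)
  have "vnorm (d (Suc m)) (forward d x W (Suc m))
      = vnorm (d (Suc m)) (\<lambda>a. \<Sum>b<d m. W (Suc m) a b * forward d x W m b)"
    by (rule vnorm_cong) (simp add: forward_Suc)
  also have "\<dots> \<le> frob (d (Suc m)) (d m) (W (Suc m)) * vnorm (d m) (forward d x W m)"
    by (rule vnorm_mat_vec_le)
  also have "\<dots> \<le> R * R ^ m"
    using frob_layer_le[OF W, of "Suc m"] Suc R
    by (intro mult_mono) (auto simp: vnorm_nonneg)
  finally show ?case by simp
qed

lemma vnorm_backward_le:
  assumes W: "W \<in> ball_R d L R" and dL: "d L = 1"
  shows "r \<le> L \<Longrightarrow> vnorm (d (L - r)) (backward d L W r) \<le> R ^ r"
proof (induction r)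
  case 0
  then show ?case using dL by (simp add: vnorm_def)
next
  case (Suc r)
  have L_Suc_r: "L - Suc r = L - r - 1" by simp
  have "vnorm (d (L - Suc r)) (backward d L W (Suc r))
      = vnorm (d (L - r - 1)) (\<lambda>a. \<Sum>m<d (L - r). backward d L W r m * W (L - r) m a)"
    by (simp only: L_Suc_r backward.simps)
  also have "\<dots> \<le> vnorm (d (L - r)) (backward d L W r) * frob (d (L - r)) (d (L - r - 1)) (W (L - r))"
    by (rule vnorm_vec_mat_le)
  also have "\<dots> \<le> R ^ r * R"
    using frob_layer_le[OF W, of "L - r"] Suc R
    by (intro mult_mono) (auto simp: frob_nonneg)
  finally show ?case by (simp add: mult.commute)
qed

text \<open>Telescoping: \<open>g\<^sub>m(W) - g\<^sub>m(V) = W\<^sub>m (g\<^sub>m\<^sub>-\<^sub>1(W) - g\<^sub>m\<^sub>-\<^sub>1(V)) + (W\<^sub>m - V\<^sub>m) g\<^sub>m\<^sub>-\<^sub>1(V)\<close>,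
  and symmetrically for the backward vectors.\<close>

lemma vnorm_forward_diff_le:
  assumes W: "W \<in> ball_R d L R" and V: "V \<in> ball_R d L R" and x: "vnorm (d 0) x \<le> 1"
  shows "m \<le> L \<Longrightarrow> vnorm (d m) (\<lambda>a. forward d x W m a - forward d x V m a)
           \<le> R ^ (m - 1) * (\<Sum>l\<in>{1..m}. layer_dist d W V l)"
proof (induction m)
  case 0
  then show ?case by (simp add: vnorm_def forward_0)
next
  case (Suc m)
  define S where "S = (\<Sum>l\<in>{1..m}. layer_dist d W V l)"
  define e where "e = layer_dist d W V (Suc m)"
  have "vnorm (d (Suc m)) (\<lambda>a. forward d x W (Suc m) a - forward d x V (Suc m) a)
      = vnorm (d (Suc m)) (\<lambda>a. (\<Sum>b<d m. W (Suc m) a b * (forward d x W m b - forward d x V m b))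
                               + (\<Sum>b<d m. (W (Suc m) a b - V (Suc m) a b) * forward d x V m b))"
    by (simp add: forward_Suc sum_subtractf[symmetric] sum.distrib[symmetric] algebra_simps)
  also have "\<dots> \<le> frob (d (Suc m)) (d m) (W (Suc m)) * vnorm (d m) (\<lambda>b. forward d x W m b - forward d x V m b)
                 + e * vnorm (d m) (forward d x V m)"
    unfolding e_def layer_dist_def diff_Suc_1
    by (rule order_trans[OF vnorm_triangle add_mono[OF vnorm_mat_vec_le vnorm_mat_vec_le]])
  also have "\<dots> \<le> R * (R ^ (m - 1) * S) + e * R ^ m"
    using Suc frob_layer_le[OF W, of "Suc m"] vnorm_forward_le[OF V x, of m] R
    by (intro add_mono mult_mono) (auto simp: S_def e_def vnorm_nonneg layer_dist_nonneg)
  also have "\<dots> \<le> R ^ m * (S + e)"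
    by (cases m) (auto simp: S_def algebra_simps)
  finally show ?case
    by (simp add: S_def e_def)
qed

lemma vnorm_backward_diff_le:
  assumes W: "W \<in> ball_R d L R" and V: "V \<in> ball_R d L R" and dL: "d L = 1"
  shows "r \<le> L \<Longrightarrow> vnorm (d (L - r)) (\<lambda>a. backward d L W r a - backward d L V r a)
           \<le> R ^ (r - 1) * (\<Sum>l\<in>{L - r<..L}. layer_dist d W V l)"
proof (induction r)
  case 0
  then show ?case by (simp add: vnorm_def)
next
  case (Suc r)
  define S where "S = (\<Sum>l\<in>{L - r<..L}. layer_dist d W V l)"
  define e where "e = layer_dist d W V (L - r)"
  have L_Suc_r: "L - Suc r = L - r - 1" by simp
  have "vnorm (d (L - Suc r)) (\<lambda>a. backward d L W (Suc r) a - backward d L V (Suc r) a)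
      = vnorm (d (L - r - 1)) (\<lambda>a. (\<Sum>m<d (L - r). (backward d L W r m - backward d L V r m) * W (L - r) m a)
                               + (\<Sum>m<d (L - r). backward d L V r m * (W (L - r) m a - V (L - r) m a)))"
    unfolding L_Suc_r
    by (simp add: sum_subtractf[symmetric] sum.distrib[symmetric] algebra_simps)
  also have "\<dots> \<le> vnorm (d (L - r)) (\<lambda>m. backward d L W r m - backward d L V r m)
                     * frob (d (L - r)) (d (L - r - 1)) (W (L - r))
                 + vnorm (d (L - r)) (backward d L V r) * e"
    unfolding e_def layer_dist_def
    by (rule order_trans[OF vnorm_triangle add_mono[OF vnorm_vec_mat_le vnorm_vec_mat_le]])
  also have "\<dots> \<le> (R ^ (r - 1) * S) * R + R ^ r * e"
    using Suc frob_layer_le[OF W, of "L - r"] vnorm_backward_le[OF V dL, of r] R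
    by (intro add_mono mult_mono) (auto simp: S_def e_def vnorm_nonneg frob_nonneg layer_dist_nonneg sum_nonneg)
  also have "\<dots> \<le> R ^ r * (S + e)"
    by (cases r) (auto simp: S_def algebra_simps)
  also have "S + e = (\<Sum>l\<in>{L - Suc r<..L}. layer_dist d W V l)"
  proof -
    have "{L - Suc r<..L} = insert (L - r) {L - r<..L}" using Suc.prems by auto
    then show ?thesis by (simp add: S_def e_def)
  qed
  finally show ?case by simp
qed

lemma net_output_diff_le:
  assumes W: "W \<in> ball_R d L R" and V: "V \<in> ball_R d L R" and dL: "d L = 1"
    and x: "vnorm (d 0) x \<le> 1"
  shows "\<bar>net_output d L x W - net_output d L x V\<bar>
           \<le> R ^ (L - 1) * (\<Sum>l\<in>{1..L}. layer_dist d W V l)"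
proof -
  have "\<bar>net_output d L x W - net_output d L x V\<bar>
      = vnorm (d L) (\<lambda>a. forward d x W L a - forward d x V L a)"
    using dL by (simp add: net_output_eq_forward vnorm_def)
  also have "\<dots> \<le> R ^ (L - 1) * (\<Sum>l\<in>{1..L}. layer_dist d W V l)"
    using vnorm_forward_diff_le[OF W V x] by simp
  finally show ?thesis .
qed

lemma pow_mult_pow_le: "a + b \<le> L - 1 \<Longrightarrow> R ^ a * R ^ b \<le> R ^ (L - 1)"
  using R by (simp add: power_increasing flip: power_add)

lemma pnorm_output_grad_le:
  assumes W: "W \<in> ball_R d L R" and dL: "d L = 1" and x: "vnorm (d 0) x \<le> 1"
  shows "pnorm d L (output_grad d L x W) \<le> real L * R ^ (L - 1)"
  unfolding output_grad_def
proof (rule pnorm_outer_le)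
  fix k assume k: "k \<in> {1..L}"
  show "vnorm (d k) (backward d L W (L - k)) \<le> R ^ (L - k)"
    using vnorm_backward_le[OF W dL, of "L - k"] k by simp
  show "vnorm (d (k - 1)) (forward d x W (k - 1)) \<le> R ^ (k - 1)"
    using vnorm_forward_le[OF W x, of "k - 1"] k by auto
  show "R ^ (L - k) * R ^ (k - 1) \<le> R ^ (L - 1)"
    using k by (intro pow_mult_pow_le) auto
qed

lemma pnorm_output_grad_diff_le:
  assumes W: "W \<in> ball_R d L R" and V: "V \<in> ball_R d L R" and dL: "d L = 1"
    and x: "vnorm (d 0) x \<le> 1"
  shows "pnorm d L (\<lambda>k i j. output_grad d L x W k i j - output_grad d L x V k i j)
           \<le> 2 * real L * R ^ (L - 1) * (\<Sum>l\<in>{1..L}. layer_dist d W V l)"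
proof -
  define S where "S = (\<Sum>l\<in>{1..L}. layer_dist d W V l)"
  have S_nonneg: "S \<ge> 0" by (simp add: S_def sum_nonneg layer_dist_nonneg)
  have sum_le_S: "(\<Sum>l\<in>A. layer_dist d W V l) \<le> S" if "A \<subseteq> {1..L}" for A
    unfolding S_def using that by (intro sum_mono2) (auto simp: layer_dist_nonneg)
  have pow_mult_S_le: "R ^ a * S * R ^ b \<le> R ^ (L - 1) * S" if "a + b \<le> L - 1" for a b
    using mult_right_mono[OF pow_mult_pow_le[OF that] S_nonneg] by (simp add: mult_ac)
  have backward_part:
    "pnorm d L (\<lambda>k i j. (backward d L W (L - k) i - backward d L V (L - k) i) * forward d x W (k - 1) j)
      \<le> real L * (R ^ (L - 1) * S)"
  proof (rule pnorm_outer_le)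
    fix k assume k: "k \<in> {1..L}"
    have "vnorm (d k) (\<lambda>a. backward d L W (L - k) a - backward d L V (L - k) a)
        \<le> R ^ (L - k - 1) * (\<Sum>l\<in>{k<..L}. layer_dist d W V l)"
      using vnorm_backward_diff_le[OF W V dL, of "L - k"] k by simp
    also have "\<dots> \<le> R ^ (L - k - 1) * S"
      using k R by (intro mult_left_mono sum_le_S) auto
    finally show "vnorm (d k) (\<lambda>a. backward d L W (L - k) a - backward d L V (L - k) a)
        \<le> R ^ (L - k - 1) * S" .
    show "vnorm (d (k - 1)) (forward d x W (k - 1)) \<le> R ^ (k - 1)"
      using vnorm_forward_le[OF W x, of "k - 1"] k by auto
    show "R ^ (L - k - 1) * S * R ^ (k - 1) \<le> R ^ (L - 1) * S"
      using k by (intro pow_mult_S_le) auto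
  qed
  have forward_part:
    "pnorm d L (\<lambda>k i j. backward d L V (L - k) i * (forward d x W (k - 1) j - forward d x V (k - 1) j))
      \<le> real L * (R ^ (L - 1) * S)"
  proof (rule pnorm_outer_le)
    fix k assume k: "k \<in> {1..L}"
    show "vnorm (d k) (backward d L V (L - k)) \<le> R ^ (L - k)"
      using vnorm_backward_le[OF V dL, of "L - k"] k by simp
    have "vnorm (d (k - 1)) (\<lambda>a. forward d x W (k - 1) a - forward d x V (k - 1) a)
        \<le> R ^ (k - 1 - 1) * (\<Sum>l\<in>{1..k - 1}. layer_dist d W V l)"
      using vnorm_forward_diff_le[OF W V x, of "k - 1"] k by auto
    also have "\<dots> \<le> R ^ (k - 1 - 1) * S"
      using k R by (intro mult_left_mono sum_le_S) auto
    finally show "vnorm (d (k - 1)) (\<lambda>a. forward d x W (k - 1) a - forward d x V (k - 1) a)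
        \<le> R ^ (k - 1 - 1) * S" .
    have "L - k + (k - 1 - 1) \<le> L - 1"
      using k by auto
    from pow_mult_S_le[OF this] show "R ^ (L - k) * (R ^ (k - 1 - 1) * S) \<le> R ^ (L - 1) * S"
      by (simp add: mult_ac)
  qed
  have "pnorm d L (\<lambda>k i j. output_grad d L x W k i j - output_grad d L x V k i j)
      = pnorm d L (\<lambda>k i j. (backward d L W (L - k) i - backward d L V (L - k) i) * forward d x W (k - 1) j
          + backward d L V (L - k) i * (forward d x W (k - 1) j - forward d x V (k - 1) j))"
    by (intro pnorm_cong) (simp add: output_grad_def algebra_simps)
  also have "\<dots> \<le> real L * (R ^ (L - 1) * S) + real L * (R ^ (L - 1) * S)"
    using pnorm_triangle backward_part forward_part by (rule order_trans[OF _ add_mono])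
  also have "\<dots> = 2 * real L * R ^ (L - 1) * S"
    by simp
  finally show ?thesis
    unfolding S_def .
qed

lemma pnorm_sample_grad_diff_le:
  assumes W: "W \<in> ball_R d L R" and V: "V \<in> ball_R d L R" and dL: "d L = 1"
    and x: "vnorm (d 0) x \<le> 1"
    and lip: "\<And>a b. \<bar>dl a - dl b\<bar> \<le> \<beta> * \<bar>a - b\<bar>" and bnd: "\<And>a. \<bar>dl a\<bar> \<le> G"
  shows "pnorm d L (\<lambda>k i j. dl (net_output d L x W) * output_grad d L x W k i j
                           - dl (net_output d L x V) * output_grad d L x V k i j)
           \<le> 2 * real L ^ 2 * R ^ (2 * L - 2) * (\<beta> + G) * pnorm d L (\<lambda>k i j. W k i j - V k i j)"
proof -
  define M where "M = R ^ (L - 1)"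
  define S where "S = (\<Sum>l\<in>{1..L}. layer_dist d W V l)"
  define c where "c = dl (net_output d L x W) - dl (net_output d L x V)"
  have \<beta>: "\<beta> \<ge> 0" using order_trans[OF abs_ge_zero lip[of 1 0]] by simp
  have G: "G \<ge> 0" using order_trans[OF abs_ge_zero bnd[of 0]] .
  have M: "M \<ge> 1" using R by (simp add: M_def)
  have S: "0 \<le> S" "S \<le> real L * pnorm d L (\<lambda>k i j. W k i j - V k i j)"
    unfolding S_def by (simp add: sum_nonneg layer_dist_nonneg) (rule sum_layer_dist_le)
  have c: "\<bar>c\<bar> \<le> \<beta> * (M * S)"
    using lip[of "net_output d L x W" "net_output d L x V"] net_output_diff_le[OF W V dL x] \<beta>
    unfolding c_def M_def S_def by (meson mult_left_mono order_trans)
  have "pnorm d L (\<lambda>k i j. dl (net_output d L x W) * output_grad d L x W k i j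
                         - dl (net_output d L x V) * output_grad d L x V k i j)
      = pnorm d L (\<lambda>k i j. c * output_grad d L x W k i j
          + dl (net_output d L x V) * (output_grad d L x W k i j - output_grad d L x V k i j))"
    by (simp add: c_def algebra_simps)
  also have "\<dots> \<le> pnorm d L (\<lambda>k i j. c * output_grad d L x W k i j)
      + pnorm d L (\<lambda>k i j. dl (net_output d L x V)
          * (output_grad d L x W k i j - output_grad d L x V k i j))"
    by (rule pnorm_triangle)
  also have "\<dots> = \<bar>c\<bar> * pnorm d L (output_grad d L x W)
      + \<bar>dl (net_output d L x V)\<bar>
        * pnorm d L (\<lambda>k i j. output_grad d L x W k i j - output_grad d L x V k i j)"
    by (simp only: pnorm_scale)
  also have "\<dots> \<le> \<beta> * (M * S) * (real L * M) + G * (2 * real L * M * S)"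
    using c bnd pnorm_output_grad_le[OF W dL x] pnorm_output_grad_diff_le[OF W V dL x] \<beta> G M S
    by (intro add_mono mult_mono) (auto simp: M_def S_def pnorm_nonneg)
  also have "\<dots> \<le> 2 * real L * M * M * (\<beta> + G) * S"
  proof -
    have "0 \<le> \<beta> * (M * S) * (real L * M)"
      using \<beta> M S(1) by simp
    moreover have "G * (2 * real L * M * S) * 1 \<le> G * (2 * real L * M * S) * M"
      using G M S(1) by (intro mult_left_mono) auto
    ultimately show ?thesis
      by (simp add: algebra_simps)
  qed
  also have "\<dots> \<le> 2 * real L ^ 2 * (M * M) * (\<beta> + G) * pnorm d L (\<lambda>k i j. W k i j - V k i j)"
    using mult_left_mono[OF S(2), of "2 * real L * M * M * (\<beta> + G)"] \<beta> G M
    by (simp add: power2_eq_square mult_ac)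
  also have "M * M = R ^ (2 * L - 2)"
    unfolding M_def power_add[symmetric] by (rule arg_cong[where f = "power R"]) simp
  finally show ?thesis .
qed

end

theorem mainTheorem8:
  fixes loss dl :: "real \<Rightarrow> real" and \<beta> G R :: real
    and n L :: nat and d :: "nat \<Rightarrow> nat" and z :: "nat \<Rightarrow> nat \<Rightarrow> real"
  assumes L: "L \<ge> 1" and dL: "d L = 1"
    and z: "\<forall>i<n. vnorm (d 0) (z i) \<le> 1"
    and deriv_l: "\<forall>x. (loss has_real_derivative dl x) (at x)"
    and lip: "\<forall>x y. \<bar>dl x - dl y\<bar> \<le> \<beta> * \<bar>x - y\<bar>"
    and bnd: "\<forall>x. \<bar>dl x\<bar> \<le> G"
    and R: "R \<ge> 1"
  shows "\<forall>W\<in>ball_R d L R. \<forall>V\<in>ball_R d L R.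
           pnorm d L (\<lambda>k i j. grad (risk loss n z d L) W k i j - grad (risk loss n z d L) V k i j)
             \<le> 2 * real L ^ 2 * R ^ (2 * L - 2) * (\<beta> + G) * pnorm d L (\<lambda>k i j. W k i j - V k i j)"
proof (intro ballI)
  fix W V assume W: "W \<in> ball_R d L R" and V: "V \<in> ball_R d L R"
  have "pnorm d L (\<lambda>k i j. grad (risk loss n z d L) W k i j - grad (risk loss n z d L) V k i j)
      = pnorm d L (\<lambda>k i j. 1 / real n * (\<Sum>x<n.
          dl (net_output d L (z x) W) * output_grad d L (z x) W k i j
          - dl (net_output d L (z x) V) * output_grad d L (z x) V k i j))"
    using grad_risk[where d = d and L = L and loss = loss and dl = dl, OF dL deriv_l[rule_format]]
    by (intro pnorm_cong) (simp add: sum_subtractf right_diff_distrib)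
  also have "\<dots> \<le> 2 * real L ^ 2 * R ^ (2 * L - 2) * (\<beta> + G) * pnorm d L (\<lambda>k i j. W k i j - V k i j)"
  proof (rule pnorm_average_le)
    show "0 \<le> 2 * real L ^ 2 * R ^ (2 * L - 2) * (\<beta> + G) * pnorm d L (\<lambda>k i j. W k i j - V k i j)"
      using lip[rule_format, of 1 0] bnd[rule_format, of 0] R by (simp add: pnorm_nonneg)
  qed (use pnorm_sample_grad_diff_le[OF R W V dL] z lip bnd in auto)
  finally show "pnorm d L (\<lambda>k i j. grad (risk loss n z d L) W k i j - grad (risk loss n z d L) V k i j)
      \<le> 2 * real L ^ 2 * R ^ (2 * L - 2) * (\<beta> + G) * pnorm d L (\<lambda>k i j. W k i j - V k i j)" .
qed

end
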